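(* In the graph process described in the context, for every $v\in[n]$, $$\bigl|\{u\in[n]: d_{H^{(q)}}(v,u)<h\}\bigr|\le 2\delta^{h-1}n.$$
   Context: Fix integers $n\ge1$, $h\ge2$, a real $\delta\in(0,1)$ with $\delta n^{1/(h-1)}>3$, and $S=\{1,\ldots,\lfloor\delta n\rfloor\}\subseteq[n]$. Let $(a_1,b_1),\ldots,(a_q,b_q)$ be a sequence of unordered pairs of distinct points of $[n]$, no pair repeated. All graphs are unweighted undirected on vertex set $[n]$; $d_G$ is the shortest-path (edge-count) distance ($\infty$ if disconnected), $\deg_G$ the degree. Graph process: $E_G^{(0)}=\{(u,v): u,v\in[n]\setminus S, u\ne v\}$, $E_H^{(0)}=\emptyset$, $G^{(i)}=([n],E_G^{(i)})$, $H^{(i)}=([n],E_H^{(i)})$. For $i=1,\ldots,q$: if $d_{G^{(i-1)}}(a_i,b_i)\le h$, choose a shortest $a_i$-$b_i$ path $P_i$ in $G^{(i-1)}$, set $E_H^{(i)}=E_H^{(i-1)}\cup\{\text{edges of }P_i\}$ and $E_G^{(i)}=E_G^{(i-1)}\setminus\{(u,v)\in E_G^{(i-1)}\setminus E_H^{(i)}: \deg_{H^{(i)}}(u)\ge\delta n^{1/(h-1)}-2\text{ or }\deg_{H^{(i)}}(v)\ge\delta n^{1/(h-1)}-2\}$; otherwise set $E_H^{(i)}=E_H^{(i-1)}$, $E_G^{(i)}=E_G^{(i-1)}$. *)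

theory Defs
  imports Complex_Main "HOL-Library.Extended_Nat"
begin

text \<open>Graphs on vertex set [n] = {1..n} are represented by their edge sets:
  sets of two-element sets of naturals.\<close>

definition gp_vertices :: "nat \<Rightarrow> nat set" where
  "gp_vertices n = {1..n}"

definition is_walk :: "nat set set \<Rightarrow> nat list \<Rightarrow> nat \<Rightarrow> nat \<Rightarrow> bool" where
  "is_walk E p a b \<longleftrightarrow> p \<noteq> [] \<and> hd p = a \<and> last p = b \<and>
     (\<forall>i. Suc i < length p \<longrightarrow> {p ! i, p ! Suc i} \<in> E)"

text \<open>Shortest-path (edge-count) distance; infinity if no walk exists.\<close>
definition gdist :: "nat set set \<Rightarrow> nat \<Rightarrow> nat \<Rightarrow> enat" where
  "gdist E a b = Inf {enat (length p - 1) | p. is_walk E p a b}"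

definition walk_edges :: "nat list \<Rightarrow> nat set set" where
  "walk_edges p = {{p ! i, p ! Suc i} | i. Suc i < length p}"

definition gdeg :: "nat set set \<Rightarrow> nat \<Rightarrow> nat" where
  "gdeg E v = card {u. {u, v} \<in> E}"

definition gp_threshold :: "nat \<Rightarrow> nat \<Rightarrow> real \<Rightarrow> real" where
  "gp_threshold n h \<delta> = \<delta> * real n powr (1 / (real h - 1)) - 2"

definition gp_S :: "nat \<Rightarrow> real \<Rightarrow> nat set" where
  "gp_S n \<delta> = {1..nat \<lfloor>\<delta> * real n\<rfloor>}"

definition gp_EG0 :: "nat \<Rightarrow> real \<Rightarrow> nat set set" where
  "gp_EG0 n \<delta> = {{u, v} | u v. u \<in> gp_vertices n - gp_S n \<delta> \<and>
                                 v \<in> gp_vertices n - gp_S n \<delta> \<and> u \<noteq> v}"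

text \<open>One step of the process; states are pairs (E_G, E_H). The choice of the
  shortest path is arbitrary (nondeterministic).\<close>
inductive gp_step :: "nat \<Rightarrow> nat \<Rightarrow> real \<Rightarrow> nat \<times> nat \<Rightarrow>
    nat set set \<times> nat set set \<Rightarrow> nat set set \<times> nat set set \<Rightarrow> bool" where
  path: "gdist EG a b \<le> enat h \<Longrightarrow> is_walk EG p a b \<Longrightarrow>
         enat (length p - 1) = gdist EG a b \<Longrightarrow>
         EH' = EH \<union> walk_edges p \<Longrightarrow>
         EG' = EG - {e \<in> EG - EH'. \<exists>w\<in>e. real (gdeg EH' w) \<ge> gp_threshold n h \<delta>} \<Longrightarrow>
         gp_step n h \<delta> (a, b) (EG, EH) (EG', EH')"
| nopath: "\<not> gdist EG a b \<le> enat h \<Longrightarrow> gp_step n h \<delta> (a, b) (EG, EH) (EG, EH)"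

inductive gp_run :: "nat \<Rightarrow> nat \<Rightarrow> real \<Rightarrow> (nat \<times> nat) list \<Rightarrow>
    nat set set \<times> nat set set \<Rightarrow> nat set set \<times> nat set set \<Rightarrow> bool" where
  Nil: "gp_run n h \<delta> [] s s"
| Cons: "gp_step n h \<delta> x s s' \<Longrightarrow> gp_run n h \<delta> xs s' s'' \<Longrightarrow> gp_run n h \<delta> (x # xs) s s''"

end

theory Submission imports Defs begin

text \<open>Let \<open>D = \<delta> n powr (1 / (h - 1))\<close>. Edges enter \<open>H\<close> only along a shortest, hence
  simple, path of \<open>G\<close>, which contributes at most two edges at each vertex; and as soon as a vertex
  reaches \<open>H\<close>-degree \<open>D - 2\<close>, every edge of \<open>G\<close> at it that is not in \<open>H\<close> is deleted. So a
  vertex gets new \<open>H\<close>-edges only while its \<open>H\<close>-degree is below \<open>D - 2\<close>, and all \<open>H\<close>-degrees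
  stay below \<open>D\<close>. Counting walks with \<open>k < h\<close> edges from \<open>v\<close> then bounds the ball of radius
  \<open>h - 1\<close> by \<open>\<Sum>k<h. D ^ k \<le> 2 D ^ (h - 1) = 2 \<delta> ^ (h - 1) n\<close>, using \<open>D \<ge> 2\<close>.\<close>

lemma is_walk_shortcut:
  assumes w: "is_walk E p a b" and ij: "i < j" "j < length p" "p ! i = p ! j"
  shows "is_walk E (take i p @ drop j p) a b"
proof -
  let ?q = "take i p @ drop j p"
  from w have ne: "p \<noteq> []" and hd: "hd p = a" and lst: "last p = b"
    and E: "\<And>k. Suc k < length p \<Longrightarrow> {p ! k, p ! Suc k} \<in> E" by (auto simp: is_walk_def)
  have len: "length ?q = i + (length p - j)" using ij by simp
  have nth: "?q ! k = p ! (if k < i then k else k - i + j)" if "k < length ?q" for k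
    using that ij by (auto simp: nth_append min_def add.commute)
  have q_ne: "?q \<noteq> []" using ij by simp
  have "hd ?q = a"
    using nth[of 0] ij q_ne hd ne by (cases "i = 0") (auto simp: hd_conv_nth)
  moreover have "last ?q = b" using ij lst by simp
  moreover have "{?q ! k, ?q ! Suc k} \<in> E" if k: "Suc k < length ?q" for k
  proof (cases "k < i")
    case True
    then show ?thesis using nth[of k] nth[of "Suc k"] k E[of k] ij by (cases "Suc k = i") auto
  next
    case False
    have "Suc (k - i + j) < length p" using False k len by linarith
    then show ?thesis using nth[of k] nth[of "Suc k"] k E[of "k - i + j"] False
      by (auto simp: Suc_diff_le)
  qed
  ultimately show ?thesis using q_ne by (auto simp: is_walk_def)
qed

lemma shortest_walk_distinct:
  assumes w: "is_walk E p a b" and shortest: "enat (length p - 1) = gdist E a b"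
  shows "distinct p"
proof (rule ccontr)
  assume "\<not> distinct p"
  then obtain i j where ij: "i < j" "j < length p" "p ! i = p ! j"
    by (metis distinct_conv_nth linorder_neqE_nat)
  let ?q = "take i p @ drop j p"
  have "gdist E a b \<le> enat (length ?q - 1)"
    unfolding gdist_def using is_walk_shortcut[OF w ij] by (blast intro: Inf_lower)
  moreover have "length ?q - 1 < length p - 1" using ij by simp
  ultimately show False using shortest by (metis enat_ord_simps(2) leD)
qed

lemma walk_edges_subset: "is_walk E p a b \<Longrightarrow> walk_edges p \<subseteq> E"
  by (auto simp: is_walk_def walk_edges_def)

lemma finite_walk_edges_neighbours: "finite {u. {u, w} \<in> walk_edges p}"
  by (rule finite_subset[of _ "set p"]) (auto simp: walk_edges_def doubleton_eq_iff)

lemma card_walk_edges_neighbours_le_2: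
  assumes "distinct p"
  shows "card {u. {u, w} \<in> walk_edges p} \<le> 2"
proof (cases "w \<in> set p")
  case False
  then have "{u. {u, w} \<in> walk_edges p} = {}"
    by (auto simp: walk_edges_def doubleton_eq_iff)
  then show ?thesis by simp
next
  case True
  then obtain j where j: "j < length p" "p ! j = w" by (metis in_set_conv_nth)
  have "{u. {u, w} \<in> walk_edges p} \<subseteq> {p ! (j - 1), p ! Suc j}"
  proof
    fix u assume "u \<in> {u. {u, w} \<in> walk_edges p}"
    then obtain i where i: "Suc i < length p" "{u, w} = {p ! i, p ! Suc i}"
      by (auto simp: walk_edges_def)
    then consider "u = p ! i" "w = p ! Suc i" | "u = p ! Suc i" "w = p ! i"
      by (auto simp: doubleton_eq_iff)
    then show "u \<in> {p ! (j - 1), p ! Suc j}"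
    proof cases
      case 1
      then have "Suc i = j" using assms j i by (metis distinct_conv_nth)
      then show ?thesis using 1 by auto
    next
      case 2
      then have "i = j" using assms j i by (metis Suc_lessD distinct_conv_nth)
      then show ?thesis using 2 by auto
    qed
  qed
  then have "card {u. {u, w} \<in> walk_edges p} \<le> card {p ! (j - 1), p ! Suc j}"
    by (rule card_mono[rotated]) simp
  also have "\<dots> \<le> 2" by (simp add: card_insert_le_m1)
  finally show ?thesis .
qed

definition gp_invariant :: "nat \<Rightarrow> nat \<Rightarrow> real \<Rightarrow> nat set set \<times> nat set set \<Rightarrow> bool" where
  "gp_invariant n h \<delta> s \<longleftrightarrow> \<Union>(fst s) \<subseteq> {1..n} \<and> \<Union>(snd s) \<subseteq> {1..n} \<and>
     (\<forall>e\<in>fst s - snd s. \<forall>w\<in>e. real (gdeg (snd s) w) < gp_threshold n h \<delta>) \<and>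
     (\<forall>w. real (gdeg (snd s) w) < gp_threshold n h \<delta> + 2)"

lemma gp_invariant_init:
  "gp_threshold n h \<delta> > 0 \<Longrightarrow> gp_invariant n h \<delta> (gp_EG0 n \<delta>, {})"
  by (auto simp: gp_invariant_def gp_EG0_def gp_vertices_def gdeg_def)

lemma gp_step_preserves_invariant:
  assumes step: "gp_step n h \<delta> x (EG, EH) (EG', EH')" and inv: "gp_invariant n h \<delta> (EG, EH)"
  shows "gp_invariant n h \<delta> (EG', EH')"
  using step
proof cases
  case (path a b p)
  let ?thr = "gp_threshold n h \<delta>"
  have path_in_G: "walk_edges p \<subseteq> EG" using walk_edges_subset[OF path(3)] .
  have "real (gdeg EH' w) < ?thr + 2" for w
  proof -
    let ?old = "{u. {u, w} \<in> EH}" and ?new = "{u. {u, w} \<in> walk_edges p - EH}"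
    have split: "{u. {u, w} \<in> EH'} = ?old \<union> ?new" using path by auto
    show ?thesis
    proof (cases "?new = {}")
      case True
      then have "{u. {u, w} \<in> EH'} = ?old" using split by blast
      then show ?thesis using inv by (auto simp: gp_invariant_def gdeg_def)
    next
      case False
      then obtain u where "{u, w} \<in> EG - EH" using path_in_G by auto
      then have old_deg: "real (gdeg EH w) < ?thr" using inv by (auto simp: gp_invariant_def)
      have "card ?new \<le> card {u. {u, w} \<in> walk_edges p}"
        by (rule card_mono[OF finite_walk_edges_neighbours]) auto
      also have "\<dots> \<le> 2"
        using card_walk_edges_neighbours_le_2 shortest_walk_distinct[OF path(3,4)] .
      finally have "gdeg EH' w \<le> gdeg EH w + 2"
        unfolding gdeg_def split using card_Un_le[of ?old ?new] by linarith
      then show ?thesis using old_deg by linarith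
    qed
  qed
  then show ?thesis using inv path path_in_G by (auto simp: gp_invariant_def not_less)
qed (use inv in simp)

lemma gp_run_preserves_invariant:
  "gp_run n h \<delta> ps s s' \<Longrightarrow> gp_invariant n h \<delta> s \<Longrightarrow> gp_invariant n h \<delta> s'"
  by (induction rule: gp_run.induct) (auto intro: gp_step_preserves_invariant)

definition walk_reach :: "nat set set \<Rightarrow> nat \<Rightarrow> nat \<Rightarrow> nat set" where
  "walk_reach E v k = {u. \<exists>p. is_walk E p v u \<and> length p = Suc k}"

lemma walk_reach_0: "walk_reach E v 0 \<subseteq> {v}"
  by (auto simp: walk_reach_def is_walk_def hd_conv_nth last_conv_nth)

lemma walk_reach_Suc: "walk_reach E v (Suc k) \<subseteq> (\<Union>x\<in>walk_reach E v k. {u. {u, x} \<in> E})"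
proof
  fix u assume "u \<in> walk_reach E v (Suc k)"
  then obtain p where w: "is_walk E p v u" and l: "length p = Suc (Suc k)"
    by (auto simp: walk_reach_def)
  let ?q = "butlast p"
  have lq: "length ?q = Suc k" using l by simp
  then have "?q \<noteq> []" by (metis length_0_conv nat.distinct(1))
  then have "is_walk E ?q v (p ! k)"
    using w l lq by (auto simp: is_walk_def nth_butlast hd_conv_nth last_conv_nth)
  then have "p ! k \<in> walk_reach E v k" using lq by (auto simp: walk_reach_def)
  moreover have "{p ! k, p ! Suc k} \<in> E" using w l by (auto simp: is_walk_def)
  moreover have "u = p ! Suc k" using w l by (auto simp: is_walk_def last_conv_nth)
  ultimately show "u \<in> (\<Union>x\<in>walk_reach E v k. {u. {u, x} \<in> E})"
    by (auto simp: insert_commute)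
qed

lemma walk_reach_subset: "walk_reach E v k \<subseteq> insert v (\<Union>E)"
proof (cases k)
  case (Suc m)
  have "{u. {u, x} \<in> E} \<subseteq> \<Union>E" for x by blast
  then show ?thesis using walk_reach_Suc[of E v m] Suc by blast
qed (use walk_reach_0 in blast)

lemma finite_walk_reach: "finite (\<Union>E) \<Longrightarrow> finite (walk_reach E v k)"
  by (rule finite_subset[OF walk_reach_subset]) simp

lemma card_walk_reach_le:
  assumes fin: "finite (\<Union>E)" and deg: "\<And>x. real (gdeg E x) \<le> D"
  shows "real (card (walk_reach E v k)) \<le> D ^ k"
proof (induction k)
  case 0
  have "card (walk_reach E v 0) \<le> card {v}" by (rule card_mono) (auto simp: walk_reach_0)
  then show ?case by simp
next
  case (Suc k)
  let ?R = "walk_reach E v k"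
  have fR: "finite ?R" using finite_walk_reach[OF fin] .
  have "card (walk_reach E v (Suc k)) \<le> card (\<Union>x\<in>?R. {u. {u, x} \<in> E})"
    by (rule card_mono[OF _ walk_reach_Suc])
      (use fR fin in \<open>blast intro: finite_subset\<close>)
  also have "\<dots> \<le> (\<Sum>x\<in>?R. gdeg E x)" unfolding gdeg_def by (rule card_UN_le[OF fR])
  finally have "real (card (walk_reach E v (Suc k))) \<le> (\<Sum>x\<in>?R. real (gdeg E x))"
    by (metis of_nat_le_iff of_nat_sum)
  also have "\<dots> \<le> real (card ?R) * D" using sum_mono[of ?R _ "\<lambda>_. D"] deg by simp
  also have "\<dots> \<le> D ^ k * D"
    using Suc deg[of v] by (intro mult_right_mono) auto
  finally show ?case by (simp add: mult.commute)
qed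

lemma dist_less_subset_walk_reach:
  "{u. gdist E v u < enat h} \<subseteq> (\<Union>k<h. walk_reach E v k)"
proof
  fix u assume "u \<in> {u. gdist E v u < enat h}"
  then obtain p where w: "is_walk E p v u" and l: "length p - 1 < h"
    unfolding gdist_def Inf_less_iff by auto
  then have "length p = Suc (length p - 1)" by (simp add: is_walk_def)
  then show "u \<in> (\<Union>k<h. walk_reach E v k)" using w l by (auto simp: walk_reach_def)
qed

lemma finite_dist_less: "finite (\<Union>E) \<Longrightarrow> finite {u. gdist E v u < enat h}"
  by (rule finite_subset[OF dist_less_subset_walk_reach]) (simp add: finite_walk_reach)

lemma card_dist_less_le:
  assumes fin: "finite (\<Union>E)" and deg: "\<And>x. real (gdeg E x) \<le> D"
  shows "real (card {u. gdist E v u < enat h}) \<le> (\<Sum>k<h. D ^ k)"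
proof -
  have "card {u. gdist E v u < enat h} \<le> card (\<Union>k<h. walk_reach E v k)"
    by (rule card_mono[OF _ dist_less_subset_walk_reach]) (simp add: finite_walk_reach[OF fin])
  also have "\<dots> \<le> (\<Sum>k<h. card (walk_reach E v k))" by (rule card_UN_le) simp
  finally have "real (card {u. gdist E v u < enat h}) \<le> (\<Sum>k<h. real (card (walk_reach E v k)))"
    by (metis of_nat_le_iff of_nat_sum)
  also have "\<dots> \<le> (\<Sum>k<h. D ^ k)" by (rule sum_mono) (use card_walk_reach_le[OF fin deg] in auto)
  finally show ?thesis .
qed

lemma sum_powers_le_twice_last: "(2::real) \<le> D \<Longrightarrow> (\<Sum>k<Suc m. D ^ k) \<le> 2 * D ^ m"
proof (induction m)
  case (Suc m)
  have "(\<Sum>k<Suc (Suc m). D ^ k) \<le> 2 * D ^ m + D ^ Suc m" using Suc by simp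
  also have "2 * D ^ m \<le> D ^ Suc m" using Suc.prems by (simp add: mult_right_mono)
  finally show ?case by simp
qed simp

lemma power_root_scaled:
  assumes "h \<ge> 2"
  shows "(\<delta> * real n powr (1 / (real h - 1))) ^ (h - 1) = \<delta> ^ (h - 1) * real n"
proof -
  have "(real n powr (1 / (real h - 1))) ^ (h - 1) = real n powr (real (h - 1) * (1 / (real h - 1)))"
    using assms by (cases "n = 0") (simp_all add: powr_power)
  also have "real (h - 1) * (1 / (real h - 1)) = 1" using assms by (simp add: of_nat_diff)
  finally show ?thesis using assms by (cases "n = 0") (simp_all add: power_mult_distrib)
qed

theorem mainTheorem7:
  fixes n h :: nat and \<delta> :: real and ps :: "(nat \<times> nat) list"
    and EG EH :: "nat set set"
  assumes "n \<ge> 1" and "h \<ge> 2" and "0 < \<delta>" and "\<delta> < 1"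
    and "\<delta> * real n powr (1 / (real h - 1)) > 3"
    and "\<forall>(a, b) \<in> set ps. a \<in> {1..n} \<and> b \<in> {1..n} \<and> a \<noteq> b"
    and "distinct (map (\<lambda>(a, b). {a, b}) ps)"
    and "gp_run n h \<delta> ps (gp_EG0 n \<delta>, {}) (EG, EH)"
  shows "\<forall>v \<in> {1..n}. real (card {u \<in> {1..n}. gdist EH v u < enat h}) \<le> 2 * \<delta> ^ (h - 1) * real n"
proof
  fix v
  define D where "D = \<delta> * real n powr (1 / (real h - 1))"
  have "gp_threshold n h \<delta> = D - 2" by (simp add: gp_threshold_def D_def)
  moreover have "gp_invariant n h \<delta> (EG, EH)"
    using gp_run_preserves_invariant[OF assms(8) gp_invariant_init] assms(5)
    by (simp add: gp_threshold_def)
  ultimately have fin: "finite (\<Union>EH)" and deg: "\<And>x. real (gdeg EH x) \<le> D"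
    by (auto simp: gp_invariant_def less_imp_le intro: finite_subset)
  have "card {u \<in> {1..n}. gdist EH v u < enat h} \<le> card {u. gdist EH v u < enat h}"
    by (intro card_mono finite_dist_less[OF fin]) auto
  then have "real (card {u \<in> {1..n}. gdist EH v u < enat h}) \<le> (\<Sum>k<Suc (h - 1). D ^ k)"
    using card_dist_less_le[OF fin deg, of v h] assms(2) by simp
  also have "\<dots> \<le> 2 * D ^ (h - 1)"
    using sum_powers_le_twice_last assms(5) by (simp add: D_def)
  finally show "real (card {u \<in> {1..n}. gdist EH v u < enat h}) \<le> 2 * \<delta> ^ (h - 1) * real n"
    using power_root_scaled[OF assms(2)] by (simp add: D_def)
qed

end
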